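(* For every integer $m\ge1$, the Riemann zeta function satisfies $$\zeta(2m+2)=\sum_{n=1}^{m}\sum_{k=1}^{\lfloor (n+1)/2\rfloor}\frac{\sqrt{4\pi}\,(-1)^{k-1}\pi^{2k}\,\Gamma(2n-2k+2)\,\zeta(2m+2-2k)}{4^{\,n-k+2}\,\Gamma\!\left(n+\tfrac52\right)\Gamma(2k)\,\Gamma(n+2-2k)}.$$ Moreover, for each fixed $n$ with $1\le n\le m$, the inner sum over $k$ is positive. *)

theory Defs
  imports "HOL-Analysis.Analysis"
begin

text \<open>Riemann zeta function on the real half-line s > 1, given by its defining Dirichlet
series. Only used at integer arguments at least 2 in the statement.\<close>
definition zeta :: "real \<Rightarrow> real" where
  "zeta s = (\<Sum>n. 1 / (real (Suc n)) powr s)"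

end

theory Submission
  imports Defs
begin

text \<open>
  Logarithmic differentiation of Euler's product for \<open>sin (\<pi> z) / (\<pi> z)\<close> gives Euler's recursion
  \<open>\<Sum>p\<le>N. (-1)^p \<pi>^(2p) / (2p+1)! * \<zeta>(2N-2p) = (-1)^(N+1) \<pi>^(2N) / (2 (2N)!)\<close>,
  read with \<open>\<zeta>(0) = -1/2\<close>. A binomial transform of these identities expresses \<open>\<zeta>(2m+2)\<close> as
  \<open>\<Sum>b\<le>m. alpha m b * \<pi>^(2b+2) * \<zeta>(2m-2b)\<close>, while the inner sum of the theorem for \<open>n = a+1\<close>
  equals \<open>\<Sum>b. (alpha (a+1) b - alpha a b) * \<pi>^(2b+2) * \<zeta>(2m-2b)\<close>; so the double sum telescopes.

  For positivity, the inner sum for \<open>n\<close> is a positive multiple of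
  \<open>\<integral>\<^sub>0\<^sup>\<pi> (\<pi> - x) (x (2\<pi> - x))^(n-1) S(x) dx\<close>, where \<open>S(x) = \<Sum>k\<ge>1. sin (k x) / k^(2(m-n)+1)\<close>
  is a polynomial positive on \<open>(0, \<pi>)\<close>; repeated integration by parts evaluates this integral.
\<close>

section \<open>Falling factorials\<close>

definition ffact :: "'a::comm_ring_1 \<Rightarrow> nat \<Rightarrow> 'a" where
  "ffact x k = (\<Prod>i<k. x - of_nat i)"

lemma ffact_0 [simp]: "ffact x 0 = 1"
  by (simp add: ffact_def)

lemma ffact_Suc: "ffact x (Suc k) = ffact x k * (x - of_nat k)"
  by (simp add: ffact_def)

lemma ffact_Suc': "ffact x (Suc k) = x * ffact (x - 1) k"
  unfolding ffact_def prod.lessThan_Suc_shift by (simp add: algebra_simps)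

lemma ffact_add: "ffact x (a + b) = ffact x a * ffact (x - of_nat a) b"
  by (induction b) (simp_all add: ffact_Suc algebra_simps)

lemma ffact_Suc_diff: "ffact (x + 1) (Suc j) - ffact x (Suc j) = of_nat (Suc j) * ffact x j"
proof -
  have "ffact (x + 1) (Suc j) = (x + 1) * ffact x j"
    by (simp add: ffact_Suc')
  then show ?thesis
    by (simp add: ffact_Suc algebra_simps)
qed

lemma ffact_of_nat: "ffact (of_nat n) k = fact k * of_nat (n choose k)"
proof (induction k arbitrary: n)
  case 0
  then show ?case by simp
next
  case (Suc k)
  show ?case
  proof (cases n)
    case 0
    then show ?thesis by (simp add: ffact_Suc')
  next
    case (Suc n')
    have "ffact (of_nat n :: 'a) (Suc k) = of_nat n * (fact k * of_nat (n' choose k))"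
      using Suc.IH[of n'] Suc by (simp add: ffact_Suc')
    also have "\<dots> = fact (Suc k) * of_nat (n choose Suc k)"
      using Suc_times_binomial_eq[of n' k] Suc
      by (simp add: algebra_simps flip: of_nat_mult)
    finally show ?thesis .
  qed
qed

lemma ffact_of_nat_eq_0: "n < k \<Longrightarrow> ffact (of_nat n) k = 0"
  unfolding ffact_def by (rule prod_zero) auto

lemma ffact_of_nat_fact:
  "k \<le> n \<Longrightarrow> ffact (of_nat n :: 'a::field_char_0) k = fact n / fact (n - k)"
  by (simp add: ffact_of_nat binomial_fact)

lemma ffact_pos:
  fixes x :: "'a::linordered_idom"
  assumes "of_nat k < x + 1"
  shows "ffact x k > 0"
  unfolding ffact_def
proof (intro prod_pos)
  fix i
  assume "i \<in> {..<k}"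
  then have "of_nat (Suc i) \<le> (of_nat k :: 'a)"
    by (intro of_nat_mono) simp
  with assms show "x - of_nat i > 0"
    by simp
qed

lemma ffact_double:
  "ffact (2 * x + 1 :: 'a::field_char_0) (2 * j) = 4^j * ffact x j * ffact (x + 1/2) j"
proof (induction j)
  case 0
  then show ?case by simp
next
  case (Suc j)
  have "ffact (2 * x + 1) (2 * Suc j) =
          ffact (2 * x + 1) (2 * j) * (2 * x + 1 - of_nat (2 * j)) * (2 * x + 1 - of_nat (Suc (2 * j)))"
    by (simp add: ffact_Suc)
  also have "\<dots> = 4^Suc j * (ffact x j * (x - of_nat j)) * (ffact (x + 1/2) j * (x + 1/2 - of_nat j))"
    unfolding Suc.IH by (simp add: algebra_simps)
  finally show ?case
    by (simp only: ffact_Suc)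
qed

lemma fact_odd_eq_ffact: "fact (2 * r + 1) = 4^r * fact r * ffact (of_nat r + 1/2 :: 'a::field_char_0) r"
proof -
  have "fact (2 * r + 1) = (ffact (of_nat (2 * r + 1)) (2 * r + 1) :: 'a)"
    using ffact_of_nat_fact[of "2 * r + 1" "2 * r + 1", where 'a='a] by simp
  also have "\<dots> = ffact (2 * of_nat r + 1) (2 * r)"
    using ffact_Suc[of "of_nat (2 * r + 1) :: 'a" "2 * r"] by (simp add: add.commute)
  also have "\<dots> = 4^r * fact r * ffact (of_nat r + 1/2) r"
    by (simp add: ffact_double ffact_of_nat_fact)
  finally show ?thesis .
qed

lemma binomial_mult_ffact_of_nat:
  assumes "M + j \<le> N"
  shows "real (N choose (M + j)) * ffact (real (M + j)) j = ffact (real N) j * real ((N - j) choose M)"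
proof -
  have "(N choose (M + j)) * ((M + j) choose j) = (N choose j) * ((N - j) choose M)"
    using choose_mult[of j "M + j" N] assms by simp
  then have binomials: "real (N choose (M + j)) * real ((M + j) choose j) = real (N choose j) * real ((N - j) choose M)"
    by (metis of_nat_mult)
  have "real (N choose (M + j)) * ffact (real (M + j)) j = fact j * (real (N choose (M + j)) * real ((M + j) choose j))"
    by (simp only: ffact_of_nat mult_ac)
  also have "\<dots> = ffact (real N) j * real ((N - j) choose M)"
    by (simp only: binomials ffact_of_nat mult_ac)
  finally show ?thesis .
qed

lemma alternating_binomial_sum_Suc:
  fixes g :: "nat \<Rightarrow> 'a::comm_ring_1"
  shows "(\<Sum>M\<le>Suc K. of_nat (Suc K choose M) * (-1)^M * g M) =
         - (\<Sum>M\<le>K. of_nat (K choose M) * (-1)^M * (g (Suc M) - g M))"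
proof -
  have "(\<Sum>M\<le>Suc K. of_nat (Suc K choose M) * (-1)^M * g M) =
        g 0 + (\<Sum>M\<le>K. of_nat (Suc K choose Suc M) * (-1)^(Suc M) * g (Suc M))"
    by (subst sum.atMost_Suc_shift) simp
  also have "(\<Sum>M\<le>K. of_nat (Suc K choose Suc M) * (-1)^(Suc M) * g (Suc M)) =
             (\<Sum>M\<le>K. of_nat (K choose M) * (-1)^(Suc M) * g (Suc M)) +
             (\<Sum>M\<le>K. of_nat (K choose Suc M) * (-1)^(Suc M) * g (Suc M))"
    by (simp add: sum.distrib[symmetric] algebra_simps)
  also have "(\<Sum>M\<le>K. of_nat (K choose Suc M) * (-1)^(Suc M) * g (Suc M)) =
             (\<Sum>M\<le>K. of_nat (K choose M) * (-1)^M * g M) - g 0"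
    using sum.atMost_Suc_shift[of "\<lambda>M. of_nat (K choose M) * (-1)^M * g M" K]
    by (simp add: binomial_eq_0)
  finally show ?thesis
    by (simp add: sum_subtractf algebra_simps sum_negf)
qed

text \<open>Up to the sign \<open>(-1)^K\<close>, the left-hand side is the \<open>K\<close>-th forward difference at \<open>0\<close> of
  \<open>\<lambda>M. ffact (of_nat M + c) j\<close>.\<close>

lemma alternating_binomial_sum_ffact:
  fixes c :: "'a::comm_ring_1"
  shows "(\<Sum>M\<le>K. of_nat (K choose M) * (-1)^M * ffact (of_nat M + c) j) =
           (-1)^K * ffact (of_nat j) K * ffact c (j - K)"
proof (induction K arbitrary: j)
  case 0
  then show ?case by simp
next
  case (Suc K)
  have "(\<Sum>M\<le>Suc K. of_nat (Suc K choose M) * (-1)^M * ffact (of_nat M + c) j) =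
        - (\<Sum>M\<le>K. of_nat (K choose M) * (-1)^M * (ffact (of_nat (Suc M) + c) j - ffact (of_nat M + c) j))"
    by (rule alternating_binomial_sum_Suc)
  also have "\<dots> = (-1)^(Suc K) * ffact (of_nat j) (Suc K) * ffact c (j - Suc K)"
  proof (cases j)
    case 0
    then show ?thesis by (simp add: ffact_Suc')
  next
    case (Suc j')
    have "ffact (of_nat (Suc M) + c) j - ffact (of_nat M + c) j = of_nat j * ffact (of_nat M + c) j'" for M
      using ffact_Suc_diff[of "of_nat M + c" j'] Suc by (simp add: add_ac)
    then have "(\<Sum>M\<le>K. of_nat (K choose M) * (-1)^M * (ffact (of_nat (Suc M) + c) j - ffact (of_nat M + c) j)) =
          of_nat j * (\<Sum>M\<le>K. of_nat (K choose M) * (-1)^M * ffact (of_nat M + c) j')"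
      by (simp add: sum_distrib_left mult_ac)
    then show ?thesis
      using Suc by (simp add: Suc.IH ffact_Suc')
  qed
  finally show ?case .
qed

lemma alternating_binomial_sum_linear:
  assumes "N \<ge> 2"
  shows "(\<Sum>M\<le>N. of_nat (N choose M) * (-1)^M * (2 * of_nat M + 1 :: 'a::comm_ring_1)) = 0"
proof -
  have "ffact (of_nat 1 :: 'a) N = 0" "ffact (of_nat 0 :: 'a) N = 0"
    using assms by (intro ffact_of_nat_eq_0; simp)+
  then have lin: "(\<Sum>M\<le>N. of_nat (N choose M) * (-1)^M * (of_nat M :: 'a)) = 0"
    and const: "(\<Sum>M\<le>N. of_nat (N choose M) * (-1)^M :: 'a) = 0"
    using alternating_binomial_sum_ffact[where 'a='a, of N 0 1]
      alternating_binomial_sum_ffact[where 'a='a, of N 0 0]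
    by (simp_all add: ffact_Suc)
  have "(\<Sum>M\<le>N. of_nat (N choose M) * (-1)^M * (2 * of_nat M + 1 :: 'a)) =
        2 * (\<Sum>M\<le>N. of_nat (N choose M) * (-1)^M * of_nat M) + (\<Sum>M\<le>N. of_nat (N choose M) * (-1)^M)"
    by (simp add: algebra_simps sum.distrib sum_distrib_left)
  then show ?thesis
    using lin const by simp
qed

lemma alternating_binomial_sum_ffact_odd:
  assumes "j \<le> N"
  shows "(\<Sum>M\<le>N. real (N choose M) * (-1)^M * ffact (2 * real M + 1) (2*j)) =
         (-1)^N * 4^j * ffact (real N) j * ffact (real j) (N - j) * ffact (real j + 1/2) (2*j - N)"
proof -
  define h where "h M = real (N choose M) * (-1)^M * ffact (real M) j * ffact (real M + 1/2) j" for M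
  have "(\<Sum>M\<le>N. real (N choose M) * (-1)^M * ffact (2 * real M + 1) (2*j)) = 4^j * (\<Sum>M\<le>N. h M)"
    unfolding ffact_double h_def sum_distrib_left by (simp add: mult_ac)
  also have "(\<Sum>M\<le>N. h M) = (\<Sum>M\<in>{j..N}. h M)"
    by (rule sum.mono_neutral_right) (auto simp: h_def ffact_of_nat_eq_0)
  also have "\<dots> = (\<Sum>M\<le>N - j. h (M + j))"
    using sum.shift_bounds_cl_nat_ivl[of h 0 j "N - j"] assms by (simp add: atLeast0AtMost)
  also have "\<dots> = ffact (real N) j * (-1)^j *
      (\<Sum>M\<le>N - j. real ((N - j) choose M) * (-1)^M * ffact (real M + (real j + 1/2)) j)"
    unfolding sum_distrib_left
  proof (intro sum.cong refl)
    fix M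
    assume "M \<in> {..N - j}"
    then have "real (N choose (M + j)) * ffact (real (M + j)) j = ffact (real N) j * real ((N - j) choose M)"
      using assms by (intro binomial_mult_ffact_of_nat) auto
    then show "h (M + j) = ffact (real N) j * (-1)^j *
        (real ((N - j) choose M) * (-1)^M * ffact (real M + (real j + 1/2)) j)"
      unfolding h_def by (simp add: power_add algebra_simps)
  qed
  also have "\<dots> = ffact (real N) j * (-1)^j * ((-1)^(N - j) * ffact (real j) (N - j) * ffact (real j + 1/2) (j - (N - j)))"
    by (simp only: alternating_binomial_sum_ffact)
  also have "j - (N - j) = 2*j - N"
    using assms by linarith
  finally have "(\<Sum>M\<le>N. real (N choose M) * (-1)^M * ffact (2 * real M + 1) (2*j)) =
      4^j * (ffact (real N) j * ((-1)^j * (-1)^(N - j)) * ffact (real j) (N - j) * ffact (real j + 1/2) (2*j - N))"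
    by (simp only: mult.assoc)
  moreover have "(-1::real)^j * (-1)^(N - j) = (-1)^N"
    using assms by (simp flip: power_add)
  ultimately show ?thesis
    by (simp add: mult_ac)
qed

lemma Gamma_add_of_nat:
  assumes "x > 0"
  shows "Gamma (x + real k) = ffact (x + real k - 1) k * Gamma x"
proof (induction k)
  case 0
  then show ?case by simp
next
  case (Suc k)
  have "x + real k \<notin> \<int>\<^sub>\<le>\<^sub>0"
    using assms by (auto dest: nonpos_Ints_nonpos)
  then have "Gamma (x + real (Suc k)) = (x + real k) * Gamma (x + real k)"
    using Gamma_plus1[of "x + real k"] by (simp add: add_ac)
  also have "\<dots> = ffact (x + real (Suc k) - 1) (Suc k) * Gamma x"
    by (simp add: Suc.IH ffact_Suc' algebra_simps)
  finally show ?case .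
qed

lemma Gamma_half_integer: "Gamma (real a + 7/2) = ffact (real a + 5/2) (a+3) * sqrt pi"
  using Gamma_add_of_nat[of "1/2" "a+3"] by (simp add: Gamma_one_half_real add_ac)

section \<open>Euler's recursion for the even zeta values\<close>

lemma powser_coeffs_eq_zero:
  fixes a :: "nat \<Rightarrow> real"
  assumes "r > 0" and zero: "\<And>t. 0 < t \<Longrightarrow> t < r \<Longrightarrow> (\<lambda>n. a n * t^n) sums 0"
  shows "a n = 0"
proof (induction n rule: less_induct)
  case (less n)
  define b where "b k = a (k + n)" for k
  have b_sums: "(\<lambda>k. b k * t^k) sums 0" if t: "0 < t" "t < r" for t
  proof -
    have "(\<lambda>k. a (k + n) * t^(k + n)) sums (0 - (\<Sum>i<n. a i * t^i))"
      using sums_split_initial_segment[OF zero[OF t], of n] by simp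
    also have "(\<Sum>i<n. a i * t^i) = 0" using less by simp
    finally have "(\<lambda>k. a (k + n) * t^(k + n) / t^n) sums (0 / t^n)"
      by (intro sums_divide) simp
    moreover have "(\<lambda>k. a (k + n) * t^(k + n) / t^n) = (\<lambda>k. b k * t^k)"
      using t by (auto simp: b_def power_add)
    ultimately show ?thesis by simp
  qed
  have "summable (\<lambda>k. b k * (r/2)^k)"
    using b_sums[of "r/2"] \<open>r > 0\<close> by (auto simp: sums_iff)
  then have "isCont (\<lambda>x. \<Sum>k. b k * x^k) 0"
    by (rule isCont_powser) (use \<open>r > 0\<close> in simp)
  then have "((\<lambda>x. \<Sum>k. b k * x^k) \<longlongrightarrow> a n) (at_right 0)"
    by (simp add: isCont_def filterlim_at_split b_def)
  moreover have "eventually (\<lambda>x. (\<Sum>k. b k * x^k) = 0) (at_right (0::real))"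
    unfolding eventually_at_right_field
    by (rule exI[of _ r]) (use \<open>r > 0\<close> b_sums in \<open>auto simp: sums_iff\<close>)
  then have "((\<lambda>x. \<Sum>k. b k * x^k) \<longlongrightarrow> 0) (at_right (0::real))"
    by (rule tendsto_eventually)
  ultimately show ?case
    using tendsto_unique by (metis trivial_limit_at_right_real)
qed

definition sinc_coeff :: "nat \<Rightarrow> real" where "sinc_coeff k = (-1)^k * pi^(2*k) / fact (2*k+1)"

definition sinc_sqrt :: "real \<Rightarrow> real" where "sinc_sqrt t = (\<Sum>k. sinc_coeff k * t^k)"

lemma sinc_coeff_sums:
  assumes "t > 0"
  shows "(\<lambda>k. sinc_coeff k * t^k) sums (sin (pi * sqrt t) / (pi * sqrt t))"
proof -
  let ?z = "pi * sqrt t"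
  have z: "?z \<noteq> 0" using assms by simp
  have "(\<lambda>n. ((-1)^n / fact (2*n+1)) *\<^sub>R ?z^(2*n+1) / ?z) sums (sin ?z / ?z)"
    by (rule sums_divide[OF sin_series])
  moreover have "((-1)^n / fact (2*n+1)) *\<^sub>R ?z^(2*n+1) / ?z = sinc_coeff n * t^n" for n
  proof -
    have "?z^(2*n+1) / ?z = ?z^(2*n)" using z by (simp add: power_add)
    also have "\<dots> = (?z^2)^n" by (simp add: power_mult)
    also have "?z^2 = pi^2 * t" using assms by (simp add: power_mult_distrib)
    finally have e: "?z^(2*n+1) / ?z = pi^(2*n) * t^n" by (simp add: power_mult_distrib power_mult)
    have "((-1)^n / fact (2*n+1)) *\<^sub>R ?z^(2*n+1) / ?z = ((-1)^n / fact (2*n+1)) * (?z^(2*n+1) / ?z)"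
      by simp
    also have "\<dots> = sinc_coeff n * t^n" unfolding e sinc_coeff_def by simp
    finally show ?thesis .
  qed
  ultimately show ?thesis by simp
qed

lemma sinc_coeff_summable: "summable (\<lambda>k. sinc_coeff k * x^k)"
proof -
  have "summable (\<lambda>k. sinc_coeff k * (norm x + 1)^k)"
    using sinc_coeff_sums[of "norm x + 1"] by (auto simp: sums_iff)
  from powser_insidea[OF this, of x] have "summable (\<lambda>k. norm (sinc_coeff k * x^k))" by simp
  thus ?thesis by (rule summable_norm_cancel)
qed

lemma sinc_sqrt_eq: "t > 0 \<Longrightarrow> sinc_sqrt t = sin (pi * sqrt t) / (pi * sqrt t)"
  using sinc_coeff_sums by (simp add: sinc_sqrt_def sums_iff)

lemma sinc_sqrt_pos: assumes "0 < t" "t < 1" shows "sinc_sqrt t > 0"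
proof -
  have "sqrt t < 1" using assms by simp
  hence "pi * sqrt t < pi" using pi_gt_zero by simp
  hence "sin (pi * sqrt t) > 0" using assms by (intro sin_gt_zero) auto
  thus ?thesis using assms by (simp add: sinc_sqrt_eq)
qed

lemma sinc_sqrt_deriv: "DERIV sinc_sqrt t :> (\<Sum>k. diffs sinc_coeff k * t^k)"
  unfolding sinc_sqrt_def by (rule termdiffs_strong_converges_everywhere[OF sinc_coeff_summable])

lemma diffs_sinc_coeff_summable: "summable (\<lambda>k. diffs sinc_coeff k * t^k)"
  by (rule termdiff_converges_all[OF sinc_coeff_summable])

definition zeta_log_coeff :: "nat \<Rightarrow> real" where "zeta_log_coeff n = zeta (real (2*n)) / real n"

lemma zeta_of_nat_sums:
  assumes "n \<ge> 2"
  shows "(\<lambda>k. 1 / real (Suc k) ^ n) sums zeta (real n)"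
proof -
  have "summable (\<lambda>k. inverse (real k ^ n))"
    by (rule inverse_power_summable) (use assms in auto)
  hence "summable (\<lambda>k. inverse (real (Suc k) ^ n))"
    by (subst summable_Suc_iff) simp
  hence "(\<lambda>k. 1 / real (Suc k) ^ n) sums (\<Sum>k. 1 / real (Suc k) ^ n)"
    by (simp add: summable_sums divide_inverse)
  moreover have "(\<Sum>k. 1 / real (Suc k) ^ n) = zeta (real n)"
    unfolding zeta_def by (intro suminf_cong) (simp add: powr_realpow)
  ultimately show ?thesis by simp
qed

lemma ln_sinc_sqrt_sums:
  assumes t: "0 < t" "t < 1"
  shows "(\<lambda>k. ln (1 - t / real (Suc k)^2)) sums ln (sinc_sqrt t)"
proof -
  have pos: "1 - t / real (Suc k)^2 > 0" for k
  proof -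
    have "t < real (Suc k)^2" using t by (smt (verit) of_nat_0_le_iff one_le_power of_nat_Suc)
    thus ?thesis by (simp add: field_simps)
  qed
  have "(\<lambda>n. \<Prod>k=1..n. 1 - (sqrt t)\<^sup>2 / (real k)\<^sup>2) \<longlonglongrightarrow> sin (pi * sqrt t) / (pi * sqrt t)"
    by (rule sin_product_formula_real') (use t in simp)
  hence "(\<lambda>n. \<Prod>k=1..n. 1 - t / (real k)\<^sup>2) \<longlonglongrightarrow> sinc_sqrt t"
    using t by (simp add: sinc_sqrt_eq)
  hence "(\<lambda>n. ln (\<Prod>k=1..n. 1 - t / (real k)\<^sup>2)) \<longlonglongrightarrow> ln (sinc_sqrt t)"
    by (rule tendsto_ln) (use sinc_sqrt_pos[OF t] in simp)
  moreover have "ln (\<Prod>k=1..n. 1 - t / (real k)\<^sup>2) = (\<Sum>k<n. ln (1 - t / real (Suc k)^2))" for n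
  proof -
    have "(\<Prod>k=1..n. 1 - t / (real k)\<^sup>2) = (\<Prod>k<n. 1 - t / (real (Suc k))\<^sup>2)"
      by (simp add: prod.atLeast1_atMost_eq)
    also have "ln \<dots> = (\<Sum>k<n. ln (1 - t / real (Suc k)^2))"
      by (rule ln_prod) (use pos in \<open>auto simp del: of_nat_Suc\<close>)
    finally show ?thesis .
  qed
  ultimately show ?thesis by (simp add: sums_def)
qed

lemma neg_ln_factor_sums:
  assumes t: "0 < t" "t < 1"
  shows "(\<lambda>n. t^n / (real n * real (Suc k)^(2*n))) sums (- ln (1 - t / real (Suc k)^2))"
proof -
  have x: "\<bar>- (t / real (Suc k)^2)\<bar> < 1"
  proof -
    have "t < real (Suc k)^2" using t by (smt (verit) of_nat_0_le_iff one_le_power of_nat_Suc)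
    thus ?thesis using t by (simp add: field_simps)
  qed
  from sums_minus[OF ln_series'[OF x]]
  have "(\<lambda>n. - (- ((- (- (t / real (Suc k)^2))) ^ n) / real n)) sums - ln (1 + - (t / real (Suc k)^2))" .
  moreover have "- (- ((- (- (t / real (Suc k)^2))) ^ n) / real n) = t^n / (real n * real (Suc k)^(2*n))" for n
    by (simp add: power_divide power_mult)
  ultimately show ?thesis by simp
qed

lemma zeta_log_coeff_sums:
  assumes t: "0 < t" "t < 1"
  shows "(\<lambda>n. zeta_log_coeff n * t^n) sums (- ln (sinc_sqrt t))"
proof -
  define f where "f = (\<lambda>(k::nat, n::nat). t^n / (real n * real (Suc k)^(2*n)))"
  have f_nonneg: "f x \<ge> 0" for x using t by (cases x) (auto simp: f_def)
  have row_sums: "((\<lambda>n. f (k, n)) has_sum (- ln (1 - t / real (Suc k)^2))) UNIV" for k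
    by (rule sums_nonneg_imp_has_sum) (use neg_ln_factor_sums[OF t, of k] f_nonneg in \<open>auto simp: f_def\<close>)
  have row_sum_nonneg: "- ln (1 - t / real (Suc k)^2) \<ge> 0" for k
    using has_sum_nonneg[OF row_sums[of k]] f_nonneg by auto
  have total: "((\<lambda>k. - ln (1 - t / real (Suc k)^2)) has_sum (- ln (sinc_sqrt t))) UNIV"
    by (rule sums_nonneg_imp_has_sum) (use sums_minus[OF ln_sinc_sqrt_sums[OF t]] row_sum_nonneg in auto)
  have f_summable: "f summable_on Sigma UNIV (\<lambda>_. UNIV)"
    by (rule summable_on_SigmaI[OF row_sums]) (use total f_nonneg in \<open>auto dest: has_sum_imp_summable\<close>)
  have f_sum: "(f has_sum (- ln (sinc_sqrt t))) (Sigma UNIV (\<lambda>_. UNIV))"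
    by (rule has_sum_SigmaI[OF row_sums total f_summable])
  hence f_swap_sum: "((\<lambda>(x,y). f (y,x)) has_sum (- ln (sinc_sqrt t))) (UNIV \<times> UNIV)"
    using has_sum_swap[THEN iffD1, OF f_sum] by simp
  have column_sums: "((\<lambda>k. (\<lambda>(x,y). f (y,x)) (n, k)) has_sum (zeta_log_coeff n * t^n)) UNIV" for n
  proof (cases "n = 0")
    case True
    thus ?thesis by (simp add: f_def zeta_log_coeff_def)
  next
    case False
    have "(\<lambda>k. t^n / real n * (1 / real (Suc k) ^ (2*n))) sums (t^n / real n * zeta (real (2*n)))"
      by (rule sums_mult[OF zeta_of_nat_sums]) (use False in auto)
    hence "((\<lambda>k. t^n / real n * (1 / real (Suc k) ^ (2*n))) has_sum (t^n / real n * zeta (real (2*n)))) UNIV"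
      by (rule sums_nonneg_imp_has_sum) (use t in auto)
    thus ?thesis by (simp add: f_def zeta_log_coeff_def mult_ac)
  qed
  have "((\<lambda>n. zeta_log_coeff n * t^n) has_sum (- ln (sinc_sqrt t))) UNIV"
    by (rule has_sum_SigmaD[OF _ column_sums]) (use f_swap_sum in simp)
  thus ?thesis by (rule has_sum_imp_sums)
qed

lemma zeta_log_coeff_summable:
  assumes "\<bar>x\<bar> < 1"
  shows "summable (\<lambda>n. zeta_log_coeff n * x^n)"
proof -
  define y where "y = (1 + \<bar>x\<bar>) / 2"
  have y: "0 < y" "y < 1" "norm x < norm y" using assms by (auto simp: y_def)
  have "summable (\<lambda>n. zeta_log_coeff n * y^n)" using zeta_log_coeff_sums[OF y(1,2)] by (simp add: sums_iff)
  from powser_insidea[OF this y(3)] show ?thesis by (rule summable_norm_cancel)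
qed

lemma diffs_zeta_log_coeff: "diffs zeta_log_coeff n = zeta (real (2 * Suc n))"
  by (simp add: diffs_def zeta_log_coeff_def del: of_nat_Suc)

lemma sinc_sqrt_log_deriv:
  assumes t: "0 < t" "t < 1"
  shows "sinc_sqrt t * (\<Sum>n. diffs zeta_log_coeff n * t^n) + (\<Sum>k. diffs sinc_coeff k * t^k) = 0"
proof -
  define K where "K = (1 + t) / 2"
  have K: "0 < K" "K < 1" "norm t < norm K" using t by (auto simp: K_def)
  have "summable (\<lambda>n. zeta_log_coeff n * K^n)"
    using zeta_log_coeff_sums[OF K(1,2)] by (simp add: sums_iff)
  then have "DERIV (\<lambda>x. \<Sum>n. zeta_log_coeff n * x^n) t :> (\<Sum>n. diffs zeta_log_coeff n * t^n)"
    by (rule termdiffs_strong[OF _ K(3)])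
  moreover have "DERIV (\<lambda>x. ln (sinc_sqrt x)) t :> (\<Sum>k. diffs sinc_coeff k * t^k) / sinc_sqrt t"
    using DERIV_chain2[OF DERIV_ln_divide[OF sinc_sqrt_pos[OF t]] sinc_sqrt_deriv] by simp
  ultimately have "DERIV (\<lambda>x. (\<Sum>n. zeta_log_coeff n * x^n) + ln (sinc_sqrt x)) t :>
      (\<Sum>n. diffs zeta_log_coeff n * t^n) + (\<Sum>k. diffs sinc_coeff k * t^k) / sinc_sqrt t"
    by (rule DERIV_add)
  then have "DERIV (\<lambda>x. 0) t :> (\<Sum>n. diffs zeta_log_coeff n * t^n) + (\<Sum>k. diffs sinc_coeff k * t^k) / sinc_sqrt t"
  proof (rule has_field_derivative_transform_within_open[of _ _ _ "{0<..<1}"])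
    fix x :: real
    assume "x \<in> {0<..<1}"
    then show "(\<Sum>n. zeta_log_coeff n * x^n) + ln (sinc_sqrt x) = 0"
      using zeta_log_coeff_sums by (auto simp: sums_iff)
  qed (use t in auto)
  then have "(\<Sum>n. diffs zeta_log_coeff n * t^n) + (\<Sum>k. diffs sinc_coeff k * t^k) / sinc_sqrt t = 0"
    using DERIV_const DERIV_unique by blast
  then show ?thesis
    using sinc_sqrt_pos[OF t] by (simp add: field_simps)
qed

lemma zeta_sinc_coeff_convolution_sums:
  assumes t: "0 < t" "t < 1"
  shows "(\<lambda>k. ((\<Sum>i\<le>k. zeta (real (2 * Suc i)) * sinc_coeff (k - i)) + diffs sinc_coeff k) * t^k) sums 0"
proof -
  have "summable (\<lambda>n. diffs zeta_log_coeff n * ((1 + t) / 2)^n)"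
    by (rule termdiff_converges[of _ 1]) (use t zeta_log_coeff_summable in auto)
  then have "summable (\<lambda>n. norm (diffs zeta_log_coeff n * t^n))"
    by (rule powser_insidea) (use t in auto)
  moreover have "summable (\<lambda>n. norm (sinc_coeff n * t^n))"
    by (rule powser_insidea[OF sinc_coeff_summable[of 2]]) (use t in auto)
  ultimately have "(\<lambda>k. \<Sum>i\<le>k. diffs zeta_log_coeff i * t^i * (sinc_coeff (k - i) * t^(k - i))) sums
      ((\<Sum>n. diffs zeta_log_coeff n * t^n) * sinc_sqrt t)"
    unfolding sinc_sqrt_def by (rule Cauchy_product_sums)
  then have "(\<lambda>k. (\<Sum>i\<le>k. diffs zeta_log_coeff i * t^i * (sinc_coeff (k - i) * t^(k - i))) + diffs sinc_coeff k * t^k)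
      sums ((\<Sum>n. diffs zeta_log_coeff n * t^n) * sinc_sqrt t + (\<Sum>k. diffs sinc_coeff k * t^k))"
    by (rule sums_add[OF _ summable_sums[OF diffs_sinc_coeff_summable]])
  also have "(\<Sum>n. diffs zeta_log_coeff n * t^n) * sinc_sqrt t + (\<Sum>k. diffs sinc_coeff k * t^k) = 0"
    using sinc_sqrt_log_deriv[OF t] by (simp add: mult.commute)
  also have "(\<lambda>k. (\<Sum>i\<le>k. diffs zeta_log_coeff i * t^i * (sinc_coeff (k - i) * t^(k - i))) + diffs sinc_coeff k * t^k) =
      (\<lambda>k. ((\<Sum>i\<le>k. zeta (real (2 * Suc i)) * sinc_coeff (k - i)) + diffs sinc_coeff k) * t^k)"
  proof
    fix k
    have "diffs zeta_log_coeff i * t^i * (sinc_coeff (k - i) * t^(k - i)) =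
          zeta (real (2 * Suc i)) * sinc_coeff (k - i) * t^k" if "i \<le> k" for i
    proof -
      have "t^i * t^(k - i) = t^k"
        using that by (simp flip: power_add)
      then show ?thesis
        by (metis diffs_zeta_log_coeff mult.assoc mult.left_commute)
    qed
    then have "(\<Sum>i\<le>k. diffs zeta_log_coeff i * t^i * (sinc_coeff (k - i) * t^(k - i))) =
        (\<Sum>i\<le>k. zeta (real (2 * Suc i)) * sinc_coeff (k - i)) * t^k"
      unfolding sum_distrib_right by (intro sum.cong) auto
    then show "(\<Sum>i\<le>k. diffs zeta_log_coeff i * t^i * (sinc_coeff (k - i) * t^(k - i))) + diffs sinc_coeff k * t^k =
        ((\<Sum>i\<le>k. zeta (real (2 * Suc i)) * sinc_coeff (k - i)) + diffs sinc_coeff k) * t^k"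
      by (simp add: distrib_right)
  qed
  finally show ?thesis .
qed

lemma zeta_sinc_coeff_convolution:
  "(\<Sum>i\<le>k. zeta (real (2 * Suc i)) * sinc_coeff (k - i)) = - diffs sinc_coeff k"
  using powser_coeffs_eq_zero[OF zero_less_one zeta_sinc_coeff_convolution_sums, of k]
  by (simp add: eq_neg_iff_add_eq_0)

lemma sum_atMost_reverse: "(\<Sum>i\<le>k. f i) = (\<Sum>i\<le>k. f (k - i))"
  for f :: "nat \<Rightarrow> 'a::comm_monoid_add"
  by (rule sum.reindex_bij_witness[where i="\<lambda>i. k - i" and j="\<lambda>i. k - i"]) auto

text \<open>\<open>zeta_even j\<close> is \<open>\<zeta>(2j)\<close>, including the value \<open>\<zeta>(0) = -1/2\<close> of the analytic continuation;
  with it Euler's recursion for the even zeta values takes a uniform shape.\<close>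

definition zeta_even :: "nat \<Rightarrow> real" where
  "zeta_even j = (if j = 0 then -1/2 else zeta (real (2*j)))"

lemma sinc_coeff_zeta_even_convolution:
  "(\<Sum>p\<le>N. sinc_coeff p * zeta_even (N - p)) = (-1)^(N+1) * pi^(2*N) / (2 * fact (2*N))"
proof (cases N)
  case 0
  then show ?thesis by (simp add: sinc_coeff_def zeta_even_def)
next
  case (Suc k)
  define c where "c = 2 * real k + 3"
  define F where "F = (fact (2 * N) :: real)"
  have "c > 0" "F > 0"
    by (simp_all add: c_def F_def)
  have "fact (2 * Suc k + 1) = c * F"
    using Suc by (simp add: c_def F_def algebra_simps)
  then have sinc_coeff_Suc: "sinc_coeff (Suc k) = (-1)^N * pi^(2*N) / (c * F)"
    using Suc by (simp add: sinc_coeff_def)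
  have "(\<Sum>p\<le>k. sinc_coeff p * zeta_even (Suc k - p)) = (\<Sum>p\<le>k. sinc_coeff p * zeta (real (2 * Suc (k - p))))"
    by (intro sum.cong refl) (auto simp: zeta_even_def Suc_diff_le)
  also have "\<dots> = (\<Sum>i\<le>k. zeta (real (2 * Suc i)) * sinc_coeff (k - i))"
    by (subst sum_atMost_reverse) (simp add: mult.commute)
  also have "\<dots> = - (real (Suc k) * sinc_coeff (Suc k))"
    unfolding zeta_sinc_coeff_convolution diffs_def by simp
  finally have "(\<Sum>p\<le>N. sinc_coeff p * zeta_even (N - p)) = - c / 2 * sinc_coeff (Suc k)"
    using Suc by (simp add: zeta_even_def c_def field_simps)
  also have "\<dots> = (-1)^(N+1) * pi^(2*N) / (2 * F)"
    using \<open>c > 0\<close> \<open>F > 0\<close> by (simp add: sinc_coeff_Suc field_simps)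
  finally show ?thesis
    by (simp add: F_def)
qed

section \<open>Positivity of the inner sums\<close>

text \<open>On \<open>[0, 2\<pi>]\<close> these polynomials are the Clausen-type sums \<open>\<Sum>k\<ge>1. sin (k x) / k^(2q+1)\<close>
  and (for \<open>q \<ge> 1\<close>) \<open>\<Sum>k\<ge>1. cos (k x) / k^(2q)\<close>; only the derivative and boundary relations
  below are used.\<close>

definition sl_odd :: "nat \<Rightarrow> real \<Rightarrow> real" where
  "sl_odd q x = (\<Sum>k\<le>q. (-1)^k * zeta_even (q - k) * x^(2*k+1) / fact (2*k+1)) + (-1)^q * pi * x^(2*q) / (2 * fact (2*q))"

definition sl_even :: "nat \<Rightarrow> real \<Rightarrow> real" where
  "sl_even q x = (\<Sum>k\<le>q. (-1)^k * zeta_even (q - k) * x^(2*k) / fact (2*k)) +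
     (if q = 0 then 0 else (-1)^q * pi * x^(2*q-1) / (2 * fact (2*q-1)))"

lemma DERIV_monomial_over_fact:
  "DERIV (\<lambda>x::real. c * x^(n+1) / fact (n+1)) x :> c * x^n / fact n"
proof -
  have "DERIV (\<lambda>x::real. x^(Suc n)) x :> real (Suc n) * x^n"
    using DERIV_pow[of "Suc n" x] by simp
  hence "DERIV (\<lambda>x::real. c * x^(Suc n) / fact (Suc n)) x :> c * (real (Suc n) * x^n) / fact (Suc n)"
    by (intro DERIV_cdivide DERIV_cmult)
  also have "c * (real (Suc n) * x^n) / fact (Suc n) = c * x^n / fact n"
    by (simp add: field_simps del: of_nat_Suc)
  finally show ?thesis by simp
qed

lemma sl_odd_deriv: "DERIV (sl_odd q) x :> sl_even q x"
proof -
  have d1: "DERIV (\<lambda>x. \<Sum>k\<le>q. (-1)^k * zeta_even (q - k) * x^(2*k+1) / fact (2*k+1)) x :>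
          (\<Sum>k\<le>q. (-1)^k * zeta_even (q - k) * x^(2*k) / fact (2*k))"
    by (rule DERIV_sum) (rule DERIV_monomial_over_fact)
  have d2: "DERIV (\<lambda>x. (-1)^q * pi * x^(2*q) / (2 * fact (2*q))) x :>
           (if q = 0 then 0 else (-1)^q * pi * x^(2*q-1) / (2 * fact (2*q-1)))"
  proof (cases q)
    case 0 thus ?thesis by simp
  next
    case (Suc r)
    have "DERIV (\<lambda>x. ((-1)^q * pi / 2) * x^(2*r+1+1) / fact (2*r+1+1)) x :>
            ((-1)^q * pi / 2) * x^(2*r+1) / fact (2*r+1)"
      by (rule DERIV_monomial_over_fact)
    thus ?thesis using Suc by (simp add: field_simps)
  qed
  show ?thesis unfolding sl_odd_def[abs_def] sl_even_def by (rule DERIV_add[OF d1 d2])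
qed

lemma sl_even_Suc_eq:
  "sl_even (Suc r) x = zeta_even (Suc r) + (\<Sum>j\<le>r. (-1)^(Suc j) * zeta_even (r - j) * x^(2*j+1+1) / fact (2*j+1+1))
      + (-1)^(Suc r) * pi * x^(2*r+1) / (2 * fact (2*r+1))"
  unfolding sl_even_def by (subst sum.atMost_Suc_shift) simp

lemma sl_even_Suc_deriv: "DERIV (sl_even (Suc r)) x :> - sl_odd r x"
proof -
  have d1: "DERIV (\<lambda>x. \<Sum>j\<le>r. (-1)^(Suc j) * zeta_even (r - j) * x^(2*j+1+1) / fact (2*j+1+1)) x :>
          (\<Sum>j\<le>r. (-1)^(Suc j) * zeta_even (r - j) * x^(2*j+1) / fact (2*j+1))"
    by (rule DERIV_sum) (rule DERIV_monomial_over_fact)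
  have d2: "DERIV (\<lambda>x. ((-1)^(Suc r) * pi / 2) * x^(2*r+1) / fact (2*r+1)) x :>
            ((-1)^(Suc r) * pi / 2) * x^(2*r) / fact (2*r)"
    by (rule DERIV_monomial_over_fact)
  have "DERIV (\<lambda>x. zeta_even (Suc r) + (\<Sum>j\<le>r. (-1)^(Suc j) * zeta_even (r - j) * x^(2*j+1+1) / fact (2*j+1+1))
      + ((-1)^(Suc r) * pi / 2) * x^(2*r+1) / fact (2*r+1)) x :>
      0 + (\<Sum>j\<le>r. (-1)^(Suc j) * zeta_even (r - j) * x^(2*j+1) / fact (2*j+1)) + ((-1)^(Suc r) * pi / 2) * x^(2*r) / fact (2*r)"
    by (intro DERIV_add d1 d2 DERIV_const)
  moreover have "(\<lambda>x. zeta_even (Suc r) + (\<Sum>j\<le>r. (-1)^(Suc j) * zeta_even (r - j) * x^(2*j+1+1) / fact (2*j+1+1))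
      + ((-1)^(Suc r) * pi / 2) * x^(2*r+1) / fact (2*r+1)) = sl_even (Suc r)"
    by (rule ext) (simp add: sl_even_Suc_eq field_simps)
  moreover have "0 + (\<Sum>j\<le>r. (-1)^(Suc j) * zeta_even (r - j) * x^(2*j+1) / fact (2*j+1)) + ((-1)^(Suc r) * pi / 2) * x^(2*r) / fact (2*r)
      = - sl_odd r x"
  proof -
    have "(\<Sum>j\<le>r. (-1)^(Suc j) * zeta_even (r - j) * x^(2*j+1) / fact (2*j+1)) =
          - (\<Sum>j\<le>r. (-1)^j * zeta_even (r - j) * x^(2*j+1) / fact (2*j+1))"
      by (subst sum_negf[symmetric]) (intro sum.cong, auto)
    moreover have "((-1)^(Suc r) * pi / 2) * x^(2*r) / fact (2*r) = - ((-1)^r * pi * x^(2*r) / (2 * fact (2*r)))"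
      by simp
    ultimately show ?thesis by (simp add: sl_odd_def)
  qed
  ultimately show ?thesis by simp
qed

lemma sl_odd_at_0: "q \<ge> 1 \<Longrightarrow> sl_odd q 0 = 0"
  by (simp add: sl_odd_def)

lemma sl_even_at_0: "q \<ge> 1 \<Longrightarrow> sl_even q 0 = zeta_even q"
proof -
  assume q: "q \<ge> 1"
  have "(\<Sum>k\<le>q. (-1)^k * zeta_even (q - k) * (0::real)^(2*k) / fact (2*k)) = zeta_even q"
    by (subst sum.atMost_shift) simp
  thus ?thesis using q by (simp add: sl_even_def)
qed

lemma sl_odd_0: "sl_odd 0 x = pi / 2 - x / 2"
  by (simp add: sl_odd_def zeta_even_def)

lemma sl_odd_at_pi: "sl_odd q pi = 0"
proof -
  have "(\<Sum>k\<le>q. (-1)^k * zeta_even (q - k) * pi^(2*k+1) / fact (2*k+1)) = pi * (\<Sum>p\<le>q. sinc_coeff p * zeta_even (q - p))"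
    by (simp add: sum_distrib_left sinc_coeff_def field_simps power_add power_mult)
  also have "\<dots> = pi * ((-1)^(q+1) * pi^(2*q) / (2 * fact (2*q)))" by (simp add: sinc_coeff_zeta_even_convolution)
  finally show ?thesis by (simp add: sl_odd_def field_simps)
qed

text \<open>\<open>sl_odd (Suc r)\<close> vanishes at \<open>0\<close> and \<open>\<pi>\<close>; a nonpositive value in between would, by the mean
  value theorem twice, make its second derivative \<open>- sl_odd r\<close> nonnegative somewhere in \<open>(0, \<pi>)\<close>.\<close>

lemma sl_odd_pos: "0 < x \<Longrightarrow> x < pi \<Longrightarrow> sl_odd q x > 0"
proof (induction q arbitrary: x)
  case 0
  thus ?case by (simp add: sl_odd_0)
next
  case (Suc r)
  show ?case
  proof (rule ccontr)
    assume neg: "\<not> sl_odd (Suc r) x > 0"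
    obtain a where a: "0 < a" "a < x" "sl_odd (Suc r) x - sl_odd (Suc r) 0 = (x - 0) * sl_even (Suc r) a"
      using MVT2[of 0 x "sl_odd (Suc r)" "sl_even (Suc r)"] Suc.prems sl_odd_deriv by blast
    obtain b where b: "x < b" "b < pi" "sl_odd (Suc r) pi - sl_odd (Suc r) x = (pi - x) * sl_even (Suc r) b"
      using MVT2[of x pi "sl_odd (Suc r)" "sl_even (Suc r)"] Suc.prems sl_odd_deriv by blast
    have ha: "sl_even (Suc r) a \<le> 0"
    proof -
      have "x * sl_even (Suc r) a \<le> 0" using a(3) neg by (simp add: sl_odd_at_0)
      thus ?thesis using Suc.prems by (simp add: mult_le_0_iff)
    qed
    have hb: "sl_even (Suc r) b \<ge> 0"
    proof -
      have "(pi - x) * sl_even (Suc r) b \<ge> 0" using b(3) neg by (simp add: sl_odd_at_pi)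
      thus ?thesis using Suc.prems by (simp add: zero_le_mult_iff)
    qed
    obtain c where c: "a < c" "c < b" "sl_even (Suc r) b - sl_even (Suc r) a = (b - a) * (- sl_odd r c)"
      using MVT2[of a b "sl_even (Suc r)" "\<lambda>x. - sl_odd r x"] a b sl_even_Suc_deriv by (smt (verit))
    have "sl_odd r c > 0" using Suc.IH[of c] a b c Suc.prems by simp
    hence "(b - a) * (- sl_odd r c) < 0" using a b by (simp add: mult_pos_neg)
    thus False using c ha hb by simp
  qed
qed

lemma continuous_on_sl_odd: "continuous_on A (sl_odd q)"
  by (intro continuous_at_imp_continuous_on ballI DERIV_isCont[OF sl_odd_deriv])

definition arch :: "real \<Rightarrow> real" where "arch x = x * (2 * pi - x)"

definition weight :: "nat \<Rightarrow> real \<Rightarrow> real" where "weight n x = (pi - x) * arch x ^ (n - 1)"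

definition dweight :: "nat \<Rightarrow> real \<Rightarrow> real" where
  "dweight k x = 2 * real k * pi^2 * arch x ^ (k - 1) - (2 * real k + 1) * arch x ^ k"

lemma arch_deriv: "DERIV arch x :> 2 * (pi - x)"
  unfolding arch_def[abs_def] by (auto intro!: derivative_eq_intros simp: algebra_simps)

lemma arch_power_deriv: "DERIV (\<lambda>x. arch x ^ k) x :> real k * arch x ^ (k - 1) * (2 * (pi - x))"
  using DERIV_power[OF arch_deriv, of k] by (simp add: mult_ac)

lemma weight_Suc_deriv: "DERIV (weight (Suc k)) x :> dweight k x"
proof -
  have "DERIV (\<lambda>x. (pi - x) * arch x ^ k) x :> (0 - 1) * arch x ^ k + (pi - x) * (real k * arch x ^ (k - 1) * (2 * (pi - x)))"
  proof -
    have d1: "DERIV (\<lambda>x. pi - x) x :> 0 - 1" by (intro DERIV_diff DERIV_const DERIV_ident)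
    show ?thesis using DERIV_mult'[OF d1 arch_power_deriv] by (simp add: algebra_simps)
  qed
  also have "(0 - 1) * arch x ^ k + (pi - x) * (real k * arch x ^ (k - 1) * (2 * (pi - x))) = dweight k x"
  proof (cases k)
    case 0 thus ?thesis by (simp add: dweight_def)
  next
    case (Suc j)
    have sq: "(pi - x)^2 = pi^2 - arch x" by (simp add: arch_def power2_eq_square algebra_simps)
    have "(pi - x) * (real k * arch x ^ (k - 1) * (2 * (pi - x))) = 2 * real k * (pi - x)^2 * arch x ^ j"
      using Suc by (simp add: power2_eq_square algebra_simps)
    also have "\<dots> = 2 * real k * (pi^2 - arch x) * arch x ^ j" by (simp only: sq)
    also have "\<dots> = 2 * real k * pi^2 * arch x ^ j - 2 * real k * arch x ^ k"
      using Suc by (simp add: algebra_simps)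
    finally show ?thesis using Suc by (simp add: dweight_def algebra_simps)
  qed
  finally show ?thesis by (simp add: weight_def[abs_def])
qed

lemma dweight_Suc_deriv:
  "DERIV (dweight (Suc j)) x :> 4 * real (Suc j) * real j * pi^2 * weight j x - 2 * real (Suc j) * (2 * real j + 3) * weight (Suc j) x"
proof -
  have "DERIV (dweight (Suc j)) x :> 2 * real (Suc j) * pi^2 * (real (Suc j - 1) * arch x ^ (Suc j - 1 - 1) * (2 * (pi - x)))
          - (2 * real (Suc j) + 1) * (real (Suc j) * arch x ^ (Suc j - 1) * (2 * (pi - x)))"
    unfolding dweight_def[abs_def]
    by (intro DERIV_diff DERIV_cmult arch_power_deriv)
  also have "2 * real (Suc j) * pi^2 * (real (Suc j - 1) * arch x ^ (Suc j - 1 - 1) * (2 * (pi - x)))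
          - (2 * real (Suc j) + 1) * (real (Suc j) * arch x ^ (Suc j - 1) * (2 * (pi - x))) =
          2 * real (Suc j) * pi^2 * (real j * arch x ^ (j - 1) * (2 * (pi - x)))
          - (2 * real (Suc j) + 1) * (real (Suc j) * arch x ^ j * (2 * (pi - x)))" by simp
  also have "2 * real (Suc j) * pi^2 * (real j * arch x ^ (j - 1) * (2 * (pi - x)))
          - (2 * real (Suc j) + 1) * (real (Suc j) * arch x ^ j * (2 * (pi - x))) =
          4 * real (Suc j) * real j * pi^2 * weight j x - 2 * real (Suc j) * (2 * real j + 3) * weight (Suc j) x"
  proof (cases j)
    case 0 thus ?thesis by (simp add: weight_def algebra_simps)
  next
    case (Suc i)
    thus ?thesis by (simp add: weight_def algebra_simps)
  qed
  finally show ?thesis .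
qed

lemma continuous_on_weight: "continuous_on A (weight n)"
  unfolding weight_def[abs_def] arch_def by (intro continuous_intros)

lemma weight_pos: "0 < x \<Longrightarrow> x < pi \<Longrightarrow> weight n x > 0"
  by (simp add: weight_def arch_def)

definition moment :: "nat \<Rightarrow> nat \<Rightarrow> real" where
  "moment n q = integral {0..pi} (\<lambda>x. weight n x * sl_odd q x)"

lemma moment_has_integral: "((\<lambda>x. weight n x * sl_odd q x) has_integral moment n q) {0..pi}"
  unfolding moment_def
  by (intro integrable_integral integrable_continuous_real continuous_intros continuous_on_weight continuous_on_sl_odd)

lemma moment_pos: "moment n q > 0"
proof -
  have "integral {0..pi} (\<lambda>x. 0) < integral {0..pi} (\<lambda>x. weight n x * sl_odd q x)"
  proof (rule integral_less_real)
    show "{0<..<pi} \<noteq> {}" using pi_gt_zero by (auto simp: not_le)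
  qed (auto intro!: continuous_intros continuous_on_weight continuous_on_sl_odd mult_pos_pos weight_pos sl_odd_pos)
  thus "moment n q > 0" by (simp add: moment_def)
qed

lemma fundamental_theorem_0_pi:
  assumes "\<And>x. DERIV F x :> f x"
  shows "(f has_integral (F pi - F 0)) {0..pi}"
proof (rule fundamental_theorem_of_calculus)
  show "0 \<le> pi" using pi_gt_zero by linarith
  fix x :: real assume "x \<in> {0..pi}"
  show "(F has_vector_derivative f x) (at x within {0..pi})"
    using has_field_derivative_at_within[OF assms[of x]]
    by (simp add: has_real_derivative_iff_has_vector_derivative)
qed

lemma moment_1: "moment 1 q = pi * zeta_even (Suc q)"
proof -
  define G where "G x = - sl_odd (Suc q) x - (pi - x) * sl_even (Suc q) x" for x
  have dG: "DERIV G x :> weight 1 x * sl_odd q x" for x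
  proof -
    have d1: "DERIV (\<lambda>x. pi - x) x :> 0 - 1" by (intro DERIV_diff DERIV_const DERIV_ident)
    have "DERIV G x :> - sl_even (Suc q) x - ((0 - 1) * sl_even (Suc q) x + (- sl_odd q x) * (pi - x))"
      unfolding G_def[abs_def] by (intro DERIV_diff DERIV_minus DERIV_mult d1 sl_odd_deriv sl_even_Suc_deriv)
    thus ?thesis by (simp add: weight_def algebra_simps)
  qed
  have "((\<lambda>x. weight 1 x * sl_odd q x) has_integral (G pi - G 0)) {0..pi}"
    by (rule fundamental_theorem_0_pi[OF dG])
  moreover have "G pi - G 0 = pi * zeta_even (Suc q)"
    by (simp add: G_def sl_odd_at_pi sl_odd_at_0 sl_even_at_0)
  ultimately show ?thesis using moment_has_integral[of 1 q] has_integral_unique by metis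
qed

lemma moment_Suc_Suc:
  "moment (Suc (Suc j)) q = 2 * real (Suc j) * (2 * real j + 3) * moment (Suc j) (Suc q)
      - 4 * real (Suc j) * real j * pi^2 * moment j (Suc q)"
proof -
  define c1 where "c1 = 4 * real (Suc j) * real j * pi^2"
  define c2 where "c2 = 2 * real (Suc j) * (2 * real j + 3)"
  define G where "G x = dweight (Suc j) x * sl_odd (Suc q) x - weight (Suc (Suc j)) x * sl_even (Suc q) x" for x
  have dG: "DERIV G x :> (c1 * (weight j x * sl_odd (Suc q) x) - c2 * (weight (Suc j) x * sl_odd (Suc q) x))
                       + weight (Suc (Suc j)) x * sl_odd q x" for x
  proof -
    have "DERIV G x :> ((c1 * weight j x - c2 * weight (Suc j) x) * sl_odd (Suc q) x + sl_even (Suc q) x * dweight (Suc j) x)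
                      - (dweight (Suc j) x * sl_even (Suc q) x + (- sl_odd q x) * weight (Suc (Suc j)) x)"
      unfolding G_def[abs_def] c1_def c2_def
      by (intro DERIV_diff DERIV_mult dweight_Suc_deriv sl_odd_deriv sl_even_Suc_deriv weight_Suc_deriv)
    thus ?thesis by (simp add: algebra_simps)
  qed
  have "((\<lambda>x. (c1 * (weight j x * sl_odd (Suc q) x) - c2 * (weight (Suc j) x * sl_odd (Suc q) x))
                       + weight (Suc (Suc j)) x * sl_odd q x) has_integral (G pi - G 0)) {0..pi}"
    by (rule fundamental_theorem_0_pi[OF dG])
  moreover have "G pi - G 0 = 0"
    by (simp add: G_def sl_odd_at_pi sl_odd_at_0 weight_def arch_def)
  ultimately have h1: "((\<lambda>x. (c1 * (weight j x * sl_odd (Suc q) x) - c2 * (weight (Suc j) x * sl_odd (Suc q) x))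
                       + weight (Suc (Suc j)) x * sl_odd q x) has_integral 0) {0..pi}" by simp
  have h2: "((\<lambda>x. c1 * (weight j x * sl_odd (Suc q) x) - c2 * (weight (Suc j) x * sl_odd (Suc q) x)) has_integral
              (c1 * moment j (Suc q) - c2 * moment (Suc j) (Suc q))) {0..pi}"
    by (intro has_integral_diff has_integral_mult_right moment_has_integral)
  have "((\<lambda>x. weight (Suc (Suc j)) x * sl_odd q x) has_integral (0 - (c1 * moment j (Suc q) - c2 * moment (Suc j) (Suc q)))) {0..pi}"
    using has_integral_diff[OF h1 h2] by simp
  hence "moment (Suc (Suc j)) q = 0 - (c1 * moment j (Suc q) - c2 * moment (Suc j) (Suc q))"
    using moment_has_integral has_integral_unique by metis
  thus ?thesis by (simp add: c1_def c2_def)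
qed

definition inner_coeff :: "nat \<Rightarrow> nat \<Rightarrow> real" where
  "inner_coeff a b = (if 2 * b \<le> a then (-1)^b * 4^b * fact (2*a - 2*b + 1) / (fact (2*b+1) * fact (a - 2*b)) else 0)"

lemma inner_coeff_Suc_Suc_0: "inner_coeff (Suc (Suc a)) 0 = 2 * (2 * real a + 5) * inner_coeff (Suc a) 0"
proof -
  define F where "F = (fact (2 * a + 3) :: real)"
  define G where "G = (fact (Suc a) :: real)"
  define u where "u = real a + 2"
  have pos: "F > 0" "G > 0" "u > 0" by (simp_all add: F_def G_def u_def)
  have f1: "fact (2 * Suc (Suc a) + 1) = (2 * real a + 5) * (2 * real a + 4) * F"
    unfolding F_def by (simp add: algebra_simps eval_nat_numeral)
  have f2: "fact (Suc (Suc a)) = u * G"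
    unfolding G_def u_def by (simp add: algebra_simps)
  have f3: "fact (2 * Suc a + 1) = F"
    unfolding F_def by (simp add: algebra_simps eval_nat_numeral)
  have "inner_coeff (Suc (Suc a)) 0 = (2 * real a + 5) * (2 * real a + 4) * F / (u * G)"
    unfolding inner_coeff_def by (simp add: f1[symmetric] f2[symmetric])
  also have "\<dots> = 2 * (2 * real a + 5) * (F / G)"
    using pos by (simp add: field_simps) (simp add: u_def algebra_simps)
  also have "F / G = inner_coeff (Suc a) 0"
    unfolding inner_coeff_def by (simp add: f3[symmetric] G_def)
  finally show ?thesis .
qed

lemma inner_coeff_recurrence_factorials:
  fixes B C :: nat
  shows "(-1::real)^(Suc B) * 4^(Suc B) * fact (2*B + 2*C + 5) / (fact (2*B+3) * fact (C+1)) =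
         2 * (4 * real B + 2 * real C + 7) * ((-1)^(Suc B) * 4^(Suc B) * fact (2*B + 2*C + 3) / (fact (2*B+3) * fact C))
         - 4 * ((-1)^B * 4^B * fact (2*B + 2*C + 3) / (fact (2*B+1) * fact (C+1)))"
proof -
  define F where "F = (fact (2*B + 2*C + 3) :: real)"
  define G where "G = (fact (2*B + 1) :: real)"
  define H where "H = (fact C :: real)"
  define P where "P = ((-1::real)^B * 4^B)"
  define u where "u = 2 * real B + 3"
  define w where "w = 2 * real B + 2"
  define z where "z = real C + 1"
  have pos: "F > 0" "G > 0" "H > 0" "u > 0" "w > 0" "z > 0"
    by (simp_all add: F_def G_def H_def u_def w_def z_def)
  have f1: "fact (2*B + 2*C + 5) = (2 * real B + 2 * real C + 5) * (2 * real B + 2 * real C + 4) * F"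
    unfolding F_def by (simp add: algebra_simps eval_nat_numeral)
  have f2: "fact (2*B + 3) = u * w * G"
    unfolding G_def u_def w_def by (simp add: algebra_simps eval_nat_numeral)
  have f3: "fact (C + 1) = z * H"
    unfolding H_def z_def by (simp add: algebra_simps)
  have p1: "(-1::real)^(Suc B) * 4^(Suc B) = - 4 * P" by (simp add: P_def)
  have "- 4 * P * ((2 * real B + 2 * real C + 5) * (2 * real B + 2 * real C + 4) * F) / (u * w * G * (z * H)) =
         2 * (4 * real B + 2 * real C + 7) * (- 4 * P * F / (u * w * G * H))
         - 4 * (P * F / (G * (z * H)))"
    using pos by (simp add: field_simps) (simp add: u_def w_def z_def algebra_simps)
  thus ?thesis unfolding f1 f2 f3 p1 F_def[symmetric] G_def[symmetric] H_def[symmetric] P_def[symmetric] .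
qed

lemma inner_coeff_Suc_Suc_Suc: "inner_coeff (Suc (Suc a)) (Suc B) = 2 * (2 * real a + 5) * inner_coeff (Suc a) (Suc B) - 4 * inner_coeff a B"
proof (cases "2 * Suc B \<le> Suc a")
  case True
  define C where "C = a - 2 * B - 1"
  have a: "a = 2 * B + 1 + C" using True by (simp add: C_def)
  have k1: "2 * Suc B \<le> Suc (Suc a)" "2 * Suc B \<le> Suc a" "2 * B \<le> a" using a by simp_all
  have c1: "2 * Suc (Suc a) - 2 * Suc B + 1 = 2*B + 2*C + 5" "2 * Suc B + 1 = 2*B+3"
           "Suc (Suc a) - 2 * Suc B = C + 1" "2 * Suc a - 2 * Suc B + 1 = 2*B + 2*C + 3"
           "Suc a - 2 * Suc B = C" "2 * a - 2 * B + 1 = 2*B + 2*C + 3" "a - 2 * B = C + 1"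
    by (simp_all add: a)
  have e1: "inner_coeff (Suc (Suc a)) (Suc B) = (-1)^(Suc B) * 4^(Suc B) * fact (2*B + 2*C + 5) / (fact (2*B+3) * fact (C+1))"
    unfolding inner_coeff_def if_P[OF k1(1)] c1 ..
  have e2: "inner_coeff (Suc a) (Suc B) = (-1)^(Suc B) * 4^(Suc B) * fact (2*B + 2*C + 3) / (fact (2*B+3) * fact C)"
    unfolding inner_coeff_def if_P[OF k1(2)] c1 ..
  have e3: "inner_coeff a B = (-1)^B * 4^B * fact (2*B + 2*C + 3) / (fact (2*B+1) * fact (C+1))"
    unfolding inner_coeff_def if_P[OF k1(3)] c1 ..
  have e4: "2 * real a + 5 = 4 * real B + 2 * real C + 7" by (simp add: a)
  show ?thesis unfolding e1 e2 e3 e4 by (rule inner_coeff_recurrence_factorials)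
next
  case False
  show ?thesis
  proof (cases "a = 2 * B")
    case True
    thus ?thesis by (simp add: inner_coeff_def)
  next
    case False
    with \<open>\<not> 2 * Suc B \<le> Suc a\<close> show ?thesis by (simp add: inner_coeff_def)
  qed
qed

lemma inner_coeff_eq_0: "a < 2 * b \<Longrightarrow> inner_coeff a b = 0"
  by (simp add: inner_coeff_def)

lemma inner_coeff_sum_rec:
  "(\<Sum>b\<le>Suc (Suc a). inner_coeff (Suc (Suc a)) b * X b) =
     2 * (2 * real a + 5) * (\<Sum>b\<le>Suc a. inner_coeff (Suc a) b * X b) - 4 * (\<Sum>b\<le>a. inner_coeff a b * X (Suc b))"
proof -
  have "(\<Sum>b\<le>Suc (Suc a). inner_coeff (Suc (Suc a)) b * X b) =
        inner_coeff (Suc (Suc a)) 0 * X 0 + (\<Sum>b\<le>Suc a. inner_coeff (Suc (Suc a)) (Suc b) * X (Suc b))"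
    by (rule sum.atMost_Suc_shift)
  also have "\<dots> = 2 * (2 * real a + 5) * (inner_coeff (Suc a) 0 * X 0 + (\<Sum>b\<le>Suc a. inner_coeff (Suc a) (Suc b) * X (Suc b)))
                 - 4 * (\<Sum>b\<le>Suc a. inner_coeff a b * X (Suc b))"
    by (simp add: inner_coeff_Suc_Suc_0 inner_coeff_Suc_Suc_Suc algebra_simps sum_subtractf sum_distrib_left)
  also have "inner_coeff (Suc a) 0 * X 0 + (\<Sum>b\<le>Suc a. inner_coeff (Suc a) (Suc b) * X (Suc b)) = (\<Sum>b\<le>Suc (Suc a). inner_coeff (Suc a) b * X b)"
    by (rule sum.atMost_Suc_shift[symmetric])
  also have "(\<Sum>b\<le>Suc (Suc a). inner_coeff (Suc a) b * X b) = (\<Sum>b\<le>Suc a. inner_coeff (Suc a) b * X b)"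
    by (simp add: inner_coeff_eq_0)
  also have "(\<Sum>b\<le>Suc a. inner_coeff a b * X (Suc b)) = (\<Sum>b\<le>a. inner_coeff a b * X (Suc b))"
    by (simp add: inner_coeff_eq_0)
  finally show ?thesis .
qed

lemma moment_closed_form:
  "moment (Suc a) q = fact a * (\<Sum>b\<le>a. inner_coeff a b * pi^(2*b+1) * zeta_even (q + a + 1 - b))"
proof (induction a arbitrary: q rule: less_induct)
  case (less a)
  consider "a = 0" | "a = 1" | a' where "a = Suc (Suc a')"
    by (metis One_nat_def not0_implies_Suc)
  then show ?case
  proof cases
    case 1
    then show ?thesis
      using moment_1[of q] by (simp add: inner_coeff_def)
  next
    case 2
    then show ?thesis
      using moment_Suc_Suc[of 0 q] moment_1[of "Suc q"] by (simp add: inner_coeff_def numeral_2_eq_2)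
  next
    case 3
    define X where "X b = pi^(2*b+1) * zeta_even (q + a + 1 - b)" for b
    have IH1: "moment (Suc (Suc a')) (Suc q) = fact (Suc a') * (\<Sum>b\<le>Suc a'. inner_coeff (Suc a') b * X b)"
      using less.IH[of "Suc a'" "Suc q"] 3 by (simp add: X_def mult.assoc)
    have "moment (Suc a') (Suc q) = fact a' * (\<Sum>b\<le>a'. inner_coeff a' b * pi^(2*b+1) * zeta_even (q + a - b))"
      using less.IH[of a' "Suc q"] 3 by simp
    also have "pi^2 * \<dots> = fact a' * (\<Sum>b\<le>a'. inner_coeff a' b * X (Suc b))"
      by (simp add: X_def sum_distrib_left power_add power2_eq_square mult_ac)
    finally have IH2: "pi^2 * moment (Suc a') (Suc q) = fact a' * (\<Sum>b\<le>a'. inner_coeff a' b * X (Suc b))" .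
    have "moment (Suc a) q = 2 * real a * (2 * real a' + 5) * moment (Suc (Suc a')) (Suc q)
          - 4 * real a * real (Suc a') * pi^2 * moment (Suc a') (Suc q)"
      using moment_Suc_Suc[of "Suc a'" q] 3 by simp
    also have "\<dots> = fact a * (2 * (2 * real a' + 5) * (\<Sum>b\<le>Suc a'. inner_coeff (Suc a') b * X b)
                      - 4 * (\<Sum>b\<le>a'. inner_coeff a' b * X (Suc b)))"
      unfolding IH1 mult.assoc[of _ "pi^2"] IH2 using 3 by (simp add: algebra_simps)
    also have "\<dots> = fact a * (\<Sum>b\<le>a. inner_coeff a b * X b)"
      using 3 by (simp only: inner_coeff_sum_rec)
    finally show ?thesis
      by (simp add: X_def mult.assoc)
  qed
qed

lemma inner_coeff_sum_pos:
  assumes "a < m"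
  shows "(\<Sum>b\<le>a. inner_coeff a b * pi^(2*b+2) * zeta_even (m - b)) > 0"
proof -
  have "(\<Sum>b\<le>a. inner_coeff a b * pi^(2*b+2) * zeta_even (m - b)) =
        pi * (\<Sum>b\<le>a. inner_coeff a b * pi^(2*b+1) * zeta_even (m - Suc a + a + 1 - b))"
    unfolding sum_distrib_left
    by (intro sum.cong refl) (use assms in \<open>auto simp: power_add power2_eq_square mult_ac\<close>)
  also have "\<dots> = pi * moment (Suc a) (m - Suc a) / fact a"
    by (simp add: moment_closed_form)
  finally show ?thesis
    using moment_pos[of "Suc a" "m - Suc a"] by simp
qed

section \<open>A binomial transform of Euler's recursion\<close>

lemma sinc_coeff_convolution_reindex:
  assumes "M \<le> N"
  shows "fact (2*M+1) * pi^(2*(N-M)) * (\<Sum>p\<le>M. sinc_coeff p * g (M - p)) =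
         (\<Sum>j\<le>N. (-1)^(M+j) * ffact (2 * real M + 1) (2*j) * pi^(2*N - 2*j) * g j)"
proof -
  have "fact (2*M+1) * pi^(2*(N-M)) * (\<Sum>p\<le>M. sinc_coeff p * g (M - p)) =
        (\<Sum>j\<le>M. fact (2*M+1) * pi^(2*(N-M)) * (sinc_coeff (M - j) * g j))"
    by (subst sum_atMost_reverse) (simp add: sum_distrib_left)
  also have "\<dots> = (\<Sum>j\<le>M. (-1)^(M+j) * ffact (2 * real M + 1) (2*j) * pi^(2*N - 2*j) * g j)"
  proof (intro sum.cong refl)
    fix j
    assume "j \<in> {..M}"
    then have j: "j \<le> M" by simp
    have "ffact (real (2*M+1)) (2*j) = fact (2*M+1) / fact (2*M+1 - 2*j)"
      using j by (intro ffact_of_nat_fact) simp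
    also have "2*M+1 - 2*j = 2*(M-j)+1"
      using j by simp
    finally have "ffact (real (2*M+1)) (2*j) = fact (2*M+1) / fact (2*(M-j)+1)" .
    moreover have "real (2*M+1) = 2 * real M + 1"
      by simp
    ultimately have ffact_eq: "ffact (2 * real M + 1) (2*j) = fact (2*M+1) / fact (2*(M-j)+1)"
      by metis
    have pi_pow: "pi^(2*(N-M)) * pi^(2*(M-j)) = pi^(2*N - 2*j)"
      using j assms by (simp flip: power_add) (simp add: algebra_simps)
    have "M + j = (M - j) + 2*j"
      using j by simp
    then have "(-1::real)^(M+j) = (-1)^(M-j) * (-1)^(2*j)"
      by (metis power_add)
    then have sign: "(-1::real)^(M-j) = (-1)^(M+j)"
      by simp
    show "fact (2*M+1) * pi^(2*(N-M)) * (sinc_coeff (M - j) * g j) =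
          (-1)^(M+j) * ffact (2 * real M + 1) (2*j) * pi^(2*N - 2*j) * g j"
      unfolding ffact_eq sinc_coeff_def using pi_pow[symmetric] sign by (simp add: field_simps)
  qed
  also have "\<dots> = (\<Sum>j\<le>N. (-1)^(M+j) * ffact (2 * real M + 1) (2*j) * pi^(2*N - 2*j) * g j)"
  proof (rule sum.mono_neutral_left)
    show "\<forall>j\<in>{..N} - {..M}. (-1)^(M+j) * ffact (2 * real M + 1) (2*j) * pi^(2*N - 2*j) * g j = 0"
      using ffact_of_nat_eq_0[of "2*M+1" "2*j" for j, where 'a=real] by (auto simp: add.commute)
  qed (use assms in auto)
  finally show ?thesis .
qed

definition beta :: "nat \<Rightarrow> nat \<Rightarrow> real" where
  "beta N j = (\<Sum>M\<le>N. real (N choose M) * (-1)^(M+j) * ffact (2 * real M + 1) (2*j))"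

lemma beta_eq:
  assumes "j \<le> N"
  shows "beta N j = (-1)^(N+j) * 4^j * ffact (real N) j * ffact (real j) (N - j) * ffact (real j + 1/2) (2*j - N)"
proof -
  have "beta N j = (-1)^j * (\<Sum>M\<le>N. real (N choose M) * (-1)^M * ffact (2 * real M + 1) (2*j))"
    unfolding beta_def sum_distrib_left by (intro sum.cong refl) (simp add: power_add)
  then show ?thesis
    using alternating_binomial_sum_ffact_odd[OF assms] by (simp add: power_add mult_ac)
qed

lemma zeta_even_beta_sum_eq_0:
  assumes "N \<ge> 2"
  shows "(\<Sum>j\<le>N. beta N j * pi^(2*N - 2*j) * zeta_even j) = 0"
proof -
  have "(\<Sum>j\<le>N. beta N j * pi^(2*N - 2*j) * zeta_even j) =
        (\<Sum>M\<le>N. real (N choose M) * (\<Sum>j\<le>N. (-1)^(M+j) * ffact (2 * real M + 1) (2*j) * pi^(2*N - 2*j) * zeta_even j))"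
    unfolding beta_def sum_distrib_right sum_distrib_left
    by (subst sum.swap) (simp add: mult_ac)
  also have "\<dots> = (\<Sum>M\<le>N. real (N choose M) *
      (fact (2*M+1) * pi^(2*(N-M)) * (\<Sum>p\<le>M. sinc_coeff p * zeta_even (M - p))))"
    by (intro sum.cong refl) (simp only: atMost_iff sinc_coeff_convolution_reindex)
  also have "\<dots> = (\<Sum>M\<le>N. - (pi^(2*N) / 2) * (real (N choose M) * (-1)^M * (2 * real M + 1)))"
  proof (intro sum.cong refl)
    fix M
    assume "M \<in> {..N}"
    then have "2*(N-M) + 2*M = 2*N"
      by simp
    then have "pi^(2*(N-M)) * pi^(2*M) = pi^(2*N)"
      by (metis power_add)
    moreover have "fact (2*M+1) / fact (2*M) = (2 * real M + 1 :: real)"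
      by simp
    ultimately show "real (N choose M) * (fact (2*M+1) * pi^(2*(N-M)) * (\<Sum>p\<le>M. sinc_coeff p * zeta_even (M - p))) =
        - (pi^(2*N) / 2) * (real (N choose M) * (-1)^M * (2 * real M + 1))"
      by (simp add: sinc_coeff_zeta_even_convolution field_simps)
  qed
  also have "\<dots> = 0"
    by (simp only: sum_distrib_left[symmetric] alternating_binomial_sum_linear[OF assms] mult_zero_right)
  finally show ?thesis .
qed

definition alpha :: "nat \<Rightarrow> nat \<Rightarrow> real" where
  "alpha m b = (-1)^b * ffact (real (m - b)) (b+1) / (fact (2*b+3) * ffact (real m + 3/2) (b+1))"

lemma fact_odd_split:
  assumes m: "m = 2*b + 1 + c"
  shows "4^(m-b) * ffact (real (m+1)) (m-b) * ffact (real (m-b) + 1/2) c * (fact (2*b+3) * ffact (real m + 3/2) (b+1))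
         = fact (2*m+3)"
proof -
  have i1: "ffact (real m + 3/2) (b+1) * ffact (real (m-b) + 1/2) c = ffact (real m + 3/2) (m-b)"
  proof -
    have "ffact (real m + 3/2) ((b+1) + c) = ffact (real m + 3/2) (b+1) * ffact (real m + 3/2 - real (b+1)) c"
      by (rule ffact_add)
    moreover have "real m + 3/2 - real (b+1) = real (m-b) + 1/2" "(b+1) + c = m - b"
      using m by simp_all
    ultimately show ?thesis by metis
  qed
  have i2: "fact (2*b+3) = 4^(b+1) * fact (b+1) * ffact (real (b+1) + 1/2) (b+1)"
    using fact_odd_eq_ffact[of "b+1"] by (simp add: eval_nat_numeral)
  have i3: "ffact (real m + 3/2) (m-b) * ffact (real (b+1) + 1/2) (b+1) = ffact (real m + 3/2) (m+1)"
  proof -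
    have "ffact (real m + 3/2) ((m-b) + (b+1)) = ffact (real m + 3/2) (m-b) * ffact (real m + 3/2 - real (m-b)) (b+1)"
      by (rule ffact_add)
    moreover have "real m + 3/2 - real (m-b) = real (b+1) + 1/2" "(m-b) + (b+1) = m + 1"
      using m by simp_all
    ultimately show ?thesis by metis
  qed
  have i4: "ffact (real (m+1)) (m-b) * fact (b+1) = fact (m+1)"
  proof -
    have "ffact (real (m+1)) (m-b) = fact (m+1) / fact (m+1-(m-b))"
      by (rule ffact_of_nat_fact) simp
    moreover have "m+1-(m-b) = b+1"
      using m by simp
    ultimately show ?thesis by simp
  qed
  have i5: "fact (2*m+3) = 4^(m+1) * fact (m+1) * ffact (real m + 3/2) (m+1)"
    using fact_odd_eq_ffact[of "m+1"] by (simp add: eval_nat_numeral add_ac)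
  have "4^(m-b) * ffact (real (m+1)) (m-b) * ffact (real (m-b) + 1/2) c * (fact (2*b+3) * ffact (real m + 3/2) (b+1))
      = (4^(m-b) * 4^(b+1)) * (ffact (real (m+1)) (m-b) * fact (b+1)) *
        (ffact (real m + 3/2) (b+1) * ffact (real (m-b) + 1/2) c * ffact (real (b+1) + 1/2) (b+1))"
    unfolding i2 by (simp add: mult_ac)
  also have "\<dots> = 4^(m+1) * fact (m+1) * ffact (real m + 3/2) (m+1)"
    unfolding i1 i3 i4 using m by (simp flip: power_add)
  finally show ?thesis
    unfolding i5 .
qed

lemma beta_eq_alpha:
  assumes "b \<le> m"
  shows "beta (m+1) (m-b) = - fact (2*m+3) * alpha m b"
proof -
  have diff: "m + 1 - (m - b) = b + 1"
    using assms by simp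
  have sign: "(-1::real)^(m + 1 + (m - b)) = - ((-1)^b)"
  proof -
    have "m + 1 + (m - b) = 2*(m-b) + b + 1"
      using assms by simp
    then have "(-1::real)^(m + 1 + (m - b)) = (-1)^(2*(m-b)) * (-1)^b * (-1)"
      by (simp only: power_add power_one_right)
    then show ?thesis
      by simp
  qed
  show ?thesis
  proof (cases "2*b + 1 \<le> m")
    case False
    then have "ffact (real (m - b)) (b+1) = 0"
      by (intro ffact_of_nat_eq_0) simp
    then show ?thesis
      using assms by (simp add: beta_eq diff alpha_def)
  next
    case True
    define c where "c = m - 2*b - 1"
    have m: "m = 2*b + 1 + c"
      using True by (simp add: c_def)
    have "2*(m-b) - (m+1) = c"
      using m by simp
    have "beta (m+1) (m-b) = (-1)^(m+1+(m-b)) * 4^(m-b) * ffact (real (m+1)) (m-b) *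
        ffact (real (m-b)) (m+1-(m-b)) * ffact (real (m-b) + 1/2) (2*(m-b) - (m+1))"
      by (rule beta_eq) (use assms in simp)
    also have "\<dots> = - ((-1)^b) * ffact (real (m - b)) (b+1) *
        (4^(m-b) * ffact (real (m+1)) (m-b) * ffact (real (m-b) + 1/2) c)"
      unfolding sign diff \<open>2*(m-b) - (m+1) = c\<close> by (simp only: mult_ac)
    also have "\<dots> = - ((-1)^b) * ffact (real (m - b)) (b+1) *
        (fact (2*m+3) / (fact (2*b+3) * ffact (real m + 3/2) (b+1)))"
    proof -
      have "ffact (real m + 3/2) (b+1) > 0"
        by (rule ffact_pos) (use assms in simp)
      then show ?thesis
        using fact_odd_split[OF m] by (simp add: field_simps)
    qed
    finally show ?thesis
      by (simp add: alpha_def)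
  qed
qed

lemma beta_top: "beta N N = fact (2*N+1)"
proof -
  have "ffact (real N) N = fact N"
    by (simp add: ffact_of_nat_fact)
  then show ?thesis
    using fact_odd_eq_ffact[where 'a=real, of N] by (simp add: beta_eq mult_ac flip: mult_2)
qed

lemma zeta_even_Suc_eq_alpha_sum:
  assumes "m \<ge> 1"
  shows "(\<Sum>b\<le>m. alpha m b * pi^(2*b+2) * zeta_even (m - b)) = zeta_even (m+1)"
proof -
  have "0 = (\<Sum>j\<le>m+1. beta (m+1) j * pi^(2*(m+1) - 2*j) * zeta_even j)"
    using zeta_even_beta_sum_eq_0[of "m+1"] assms by simp
  also have "\<dots> = fact (2*m+3) * zeta_even (m+1) + (\<Sum>j\<le>m. beta (m+1) j * pi^(2*(m+1) - 2*j) * zeta_even j)"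
    using beta_top[of "m+1"] by (simp add: eval_nat_numeral)
  also have "(\<Sum>j\<le>m. beta (m+1) j * pi^(2*(m+1) - 2*j) * zeta_even j) =
             (\<Sum>b\<le>m. beta (m+1) (m-b) * pi^(2*(m+1) - 2*(m-b)) * zeta_even (m-b))"
    by (rule sum_atMost_reverse)
  also have "\<dots> = - fact (2*m+3) * (\<Sum>b\<le>m. alpha m b * pi^(2*b+2) * zeta_even (m - b))"
    unfolding sum_distrib_left
  proof (intro sum.cong refl)
    fix b
    assume "b \<in> {..m}"
    moreover from this have "2*(m+1) - 2*(m-b) = 2*b+2"
      by simp
    ultimately show "beta (m+1) (m-b) * pi^(2*(m+1) - 2*(m-b)) * zeta_even (m-b) =
        - fact (2*m+3) * (alpha m b * pi^(2*b+2) * zeta_even (m - b))"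
      using beta_eq_alpha[of b m] by simp
  qed
  finally show ?thesis
    by (simp add: algebra_simps)
qed

section \<open>Telescoping the double sum\<close>

definition kappa :: "nat \<Rightarrow> real" where
  "kappa a = 2 / (4^(a+2) * ffact (real a + 5/2) (a+3))"

lemma kappa_pos: "kappa a > 0"
proof -
  have "ffact (real a + 5/2) (a+3) > 0"
    by (rule ffact_pos) simp
  then show ?thesis
    by (simp add: kappa_def)
qed

lemma alpha_Suc_diff:
  assumes a: "a = 2*b + c"
  shows "alpha (Suc a) b - alpha a b = (-1)^b * fact (b+c) /
           (4 * fact c * fact (2*b+1) * (real a + 5/2) * (real a + 3/2 - real b) * ffact (real a + 3/2) b)"
proof -
  define P where "P = ffact (real (b + c)) b"
  define Q where "Q = ffact (real a + 3/2) b"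
  define D where "D = (fact (2*b+1) :: real)"
  define Y1 where "Y1 = real a + 5/2"
  define Y2 where "Y2 = real a + 3/2 - real b"
  define Z where "Z = (real b + 3/2) * (real b + 1)"
  have "Q > 0"
    unfolding Q_def by (rule ffact_pos) (simp add: a)
  moreover have "D > 0" "Y1 > 0" "Y2 > 0" "Z > 0"
    by (simp_all add: D_def Y1_def Y2_def Z_def a)
  ultimately have pos: "Q * D * Y1 * Y2 * Z \<noteq> 0"
    by simp
  have fact_2b3: "fact (2*b+3) = 4 * Z * D"
    unfolding D_def Z_def by (simp add: eval_nat_numeral algebra_simps)
  have "Suc a - b = b + c + 1" "a - b = b + c"
    using a by simp_all
  then have "ffact (real (Suc a - b)) (b+1) = (real (b+c) + 1) * P"
    and "ffact (real (a - b)) (b+1) = real c * P"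
    unfolding P_def by (simp add: ffact_Suc' del: of_nat_add, simp add: ffact_Suc)
  moreover have "ffact (real (Suc a) + 3/2) (b+1) = Y1 * Q"
    and "ffact (real a + 3/2) (b+1) = Q * Y2"
    unfolding Q_def Y1_def Y2_def by (simp add: ffact_Suc' algebra_simps, simp add: ffact_Suc)
  ultimately have "alpha (Suc a) b - alpha a b =
      (-1)^b * ((real (b+c) + 1) * P) / (4 * Z * D * (Y1 * Q)) - (-1)^b * (real c * P) / (4 * Z * D * (Q * Y2))"
    by (simp add: alpha_def fact_2b3)
  also have "\<dots> = (-1)^b * P * ((real (b+c) + 1) * Y2 - real c * Y1) / (4 * Z * D * Y1 * Y2 * Q)"
    using pos by (simp add: field_simps)
  also have "(real (b+c) + 1) * Y2 - real c * Y1 = Z"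
    by (simp add: Z_def Y1_def Y2_def a algebra_simps)
  also have "P = fact (b+c) / fact c"
    unfolding P_def by (subst ffact_of_nat_fact) simp_all
  finally show ?thesis
    unfolding Q_def[symmetric] D_def[symmetric] Y1_def[symmetric] Y2_def[symmetric]
    using pos by (simp add: field_simps)
qed

lemma kappa_mult_inner_coeff_eq:
  assumes a: "a = 2*b + c"
  shows "kappa a * inner_coeff a b = (-1)^b * fact (b+c) /
           (4 * fact c * fact (2*b+1) * (real a + 5/2) * (real a + 3/2 - real b) * ffact (real a + 3/2) b)"
proof -
  define Q where "Q = ffact (real a + 3/2) b"
  define H where "H = ffact (real (b+c) + 1/2) (b+c)"
  define Y1 where "Y1 = real a + 5/2"
  define Y2 where "Y2 = real a + 3/2 - real b"
  have "Q > 0"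
    unfolding Q_def by (rule ffact_pos) (simp add: a)
  moreover have "H > 0"
    unfolding H_def by (rule ffact_pos) simp
  moreover have "Y1 > 0" "Y2 > 0"
    by (simp_all add: Y1_def Y2_def a)
  ultimately have pos: "Q * H * Y1 * Y2 \<noteq> 0"
    by simp
  have "inner_coeff a b = (-1)^b * 4^b * fact (2*(b+c)+1) / (fact (2*b+1) * fact c)"
    using a by (simp add: inner_coeff_def)
  also have "fact (2*(b+c)+1) = 4^(b+c) * fact (b+c) * H"
    unfolding H_def by (rule fact_odd_eq_ffact)
  finally have inner_coeff_eq: "inner_coeff a b = (-1)^b * 4^b * (4^(b+c) * fact (b+c) * H) / (fact (2*b+1) * fact c)" .
  have "ffact (real a + 5/2) ((b+2) + (b+c+1)) = ffact (real a + 5/2) (b+2) * ffact (real a + 5/2 - real (b+2)) (b+c+1)"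
    by (rule ffact_add)
  moreover have "ffact (real a + 5/2) (b+2) = Y1 * Q * Y2"
  proof -
    have "ffact (real a + 5/2) (Suc b) = Y1 * Q"
      unfolding Q_def Y1_def by (simp add: ffact_Suc' algebra_simps)
    then show ?thesis
      using ffact_Suc[of "real a + 5/2" "Suc b"] by (simp add: Y2_def algebra_simps)
  qed
  moreover have "ffact (real a + 5/2 - real (b+2)) (b+c+1) = H / 2"
    unfolding H_def using a by (simp add: ffact_Suc algebra_simps)
  moreover have "(b+2) + (b+c+1) = a + 3"
    using a by simp
  ultimately have ffact_eq: "ffact (real a + 5/2) (a+3) = Y1 * Q * Y2 * (H / 2)"
    by metis
  have "(4::real)^(a+2) = 4^b * 4^(b+c) * 16"
    using a by (simp add: eval_nat_numeral flip: power_add)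
  then show ?thesis
    unfolding kappa_def inner_coeff_eq ffact_eq
    unfolding Q_def[symmetric] Y1_def[symmetric] Y2_def[symmetric]
    using pos by (simp add: field_simps)
qed

lemma kappa_mult_inner_coeff: "kappa a * inner_coeff a b = alpha (Suc a) b - alpha a b"
proof (cases "2 * b \<le> a")
  case False
  then have "ffact (real (Suc a - b)) (Suc b) = 0" "ffact (real (a - b)) (Suc b) = 0"
    by (intro ffact_of_nat_eq_0; simp)+
  then show ?thesis
    using False by (simp add: inner_coeff_def alpha_def)
next
  case True
  then have "a = 2*b + (a - 2*b)"
    by simp
  then show ?thesis
    using alpha_Suc_diff kappa_mult_inner_coeff_eq by metis
qed

lemma alpha_0: "alpha 0 b = 0"
  using ffact_of_nat_eq_0[where 'a=real, of 0 "b+1"] by (simp add: alpha_def)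

definition zeta_summand :: "nat \<Rightarrow> nat \<Rightarrow> nat \<Rightarrow> real" where
  "zeta_summand m n k = sqrt (4*pi) * (-1)^(k-1) * pi^(2*k) * Gamma (real (2*n-2*k+2)) * zeta (real (2*m+2-2*k))
     / (4 powr (real n - real k + 2) * Gamma (real n + 5/2) * Gamma (real (2*k)) * Gamma (real n + 2 - real (2*k)))"

lemma zeta_summand_eq:
  assumes "2 * b \<le> a" "b < m"
  shows "zeta_summand m (Suc a) (Suc b) = kappa a * inner_coeff a b * pi^(2*b+2) * zeta_even (m - b)"
proof -
  define F1 where "F1 = (fact (2*a - 2*b + 1) :: real)"
  define F2 where "F2 = (fact (2*b + 1) :: real)"
  define F3 where "F3 = (fact (a - 2*b) :: real)"
  define G where "G = ffact (real a + 5/2) (a+3)"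
  have "Gamma (real (2 * Suc a - 2 * Suc b + 2)) = F1"
    using Gamma_fact[of "2*a - 2*b + 1"] assms by (simp add: F1_def Suc_diff_le add_ac)
  moreover have "Gamma (real (2 * Suc b)) = F2"
    using Gamma_fact[of "2*b + 1"] by (simp add: F2_def add_ac)
  moreover have "Gamma (real (Suc a) + 2 - real (2 * Suc b)) = F3"
    using Gamma_fact[of "a - 2*b"] assms by (simp add: F3_def of_nat_diff add_ac)
  moreover have "Gamma (real (Suc a) + 5/2) = G * sqrt pi"
    using Gamma_half_integer[of a] by (simp add: G_def add_ac)
  moreover have "4 powr (real (Suc a) - real (Suc b) + 2) = 4^(a - b + 2)"
  proof -
    have "real (Suc a) - real (Suc b) + 2 = real (a - b + 2)"
      using assms by simp
    then show ?thesis
      by (metis powr_realpow zero_less_numeral)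
  qed
  moreover have "zeta (real (2*m + 2 - 2 * Suc b)) = zeta_even (m - b)"
    using assms by (simp add: zeta_even_def diff_mult_distrib2)
  moreover have "sqrt (4*pi) = 2 * sqrt pi"
    by (simp add: real_sqrt_mult)
  moreover have "(-1::real)^(Suc b - 1) = (-1)^b" "pi^(2 * Suc b) = pi^(2*b+2)"
    by simp_all
  ultimately have "zeta_summand m (Suc a) (Suc b) =
      2 * sqrt pi * (-1)^b * pi^(2*b+2) * F1 * zeta_even (m - b) / (4^(a - b + 2) * (G * sqrt pi) * F2 * F3)"
    unfolding zeta_summand_def by (simp only:)
  also have "\<dots> = 2 / (4^(a - b + 2) * 4^b * G) * ((-1)^b * 4^b * F1 / (F2 * F3)) * pi^(2*b+2) * zeta_even (m - b)"
  proof -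
    have "G > 0"
      unfolding G_def by (rule ffact_pos) simp
    moreover have "F2 > 0" "F3 > 0"
      by (simp_all add: F2_def F3_def)
    ultimately show ?thesis
      by (simp add: field_simps)
  qed
  also have "(4::real)^(a - b + 2) * 4^b = 4^(a+2)"
    using assms by (simp flip: power_add)
  finally show ?thesis
    using assms by (simp add: kappa_def inner_coeff_def F1_def F2_def F3_def G_def)
qed

lemma inner_sum_eq:
  assumes "a < m"
  shows "(\<Sum>k=1..(Suc a + 1) div 2. zeta_summand m (Suc a) k) =
         kappa a * (\<Sum>b\<le>a. inner_coeff a b * pi^(2*b+2) * zeta_even (m - b))"
proof -
  have "(\<Sum>k=1..(Suc a + 1) div 2. zeta_summand m (Suc a) k) = (\<Sum>b=0..a div 2. zeta_summand m (Suc a) (Suc b))"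
    using sum.shift_bounds_cl_Suc_ivl[of "zeta_summand m (Suc a)" 0 "a div 2"] by simp
  also have "\<dots> = (\<Sum>b=0..a div 2. kappa a * (inner_coeff a b * pi^(2*b+2) * zeta_even (m - b)))"
    using assms by (intro sum.cong refl) (auto simp: zeta_summand_eq mult_ac)
  also have "\<dots> = (\<Sum>b\<le>a. kappa a * (inner_coeff a b * pi^(2*b+2) * zeta_even (m - b)))"
    by (rule sum.mono_neutral_left) (auto simp: inner_coeff_eq_0)
  finally show ?thesis
    by (simp add: sum_distrib_left)
qed

lemma inner_sum_pos:
  assumes "n \<in> {1..m}"
  shows "(\<Sum>k=1..(n+1) div 2. zeta_summand m n k) > 0"
proof -
  obtain a where "n = Suc a" "a < m"
    using assms by (cases n) auto
  then show ?thesis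
    using inner_sum_eq[of a m] kappa_pos[of a] inner_coeff_sum_pos[of a m] by simp
qed

lemma zeta_summand_double_sum:
  assumes "m \<ge> 1"
  shows "(\<Sum>n=1..m. \<Sum>k=1..(n+1) div 2. zeta_summand m n k) = zeta (real (2*m+2))"
proof -
  define X where "X b = pi^(2*b+2) * zeta_even (m - b)" for b
  have "(\<Sum>n=1..m. \<Sum>k=1..(n+1) div 2. zeta_summand m n k) = (\<Sum>a<m. \<Sum>k=1..(Suc a+1) div 2. zeta_summand m (Suc a) k)"
    by (simp add: sum.atLeast1_atMost_eq)
  also have "\<dots> = (\<Sum>a<m. \<Sum>b\<le>m. kappa a * inner_coeff a b * X b)"
  proof (rule sum.cong[OF refl])
    fix a
    assume a: "a \<in> {..<m}"
    then have "(\<Sum>k=1..(Suc a+1) div 2. zeta_summand m (Suc a) k) = (\<Sum>b\<le>a. kappa a * inner_coeff a b * X b)"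
      by (simp only: inner_sum_eq lessThan_iff sum_distrib_left X_def mult.assoc)
    also have "\<dots> = (\<Sum>b\<le>m. kappa a * inner_coeff a b * X b)"
      by (intro sum.mono_neutral_left) (use a in \<open>auto simp: inner_coeff_eq_0\<close>)
    finally show "(\<Sum>k=1..(Suc a+1) div 2. zeta_summand m (Suc a) k) = (\<Sum>b\<le>m. kappa a * inner_coeff a b * X b)" .
  qed
  also have "\<dots> = (\<Sum>b\<le>m. (\<Sum>a<m. alpha (Suc a) b - alpha a b) * X b)"
    by (subst sum.swap) (simp add: kappa_mult_inner_coeff sum_distrib_right)
  also have "\<dots> = (\<Sum>b\<le>m. alpha m b * X b)"
  proof (intro sum.cong refl)
    fix b
    show "(\<Sum>a<m. alpha (Suc a) b - alpha a b) * X b = alpha m b * X b"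
      using sum_lessThan_telescope[of "\<lambda>a. alpha a b" m] by (simp add: alpha_0)
  qed
  also have "\<dots> = zeta_even (m+1)"
    using zeta_even_Suc_eq_alpha_sum[OF assms] by (simp add: X_def mult_ac)
  finally show ?thesis
    by (simp add: zeta_even_def)
qed

theorem mainTheorem4:
  fixes m :: nat
  assumes "m \<ge> 1"
  shows "zeta (real (2*m+2)) =
           (\<Sum>n=1..m. \<Sum>k=1..(n+1) div 2.
              sqrt (4*pi) * (-1)^(k-1) * pi^(2*k) * Gamma (real (2*n-2*k+2)) * zeta (real (2*m+2-2*k))
              / (4 powr (real n - real k + 2) * Gamma (real n + 5/2) * Gamma (real (2*k)) * Gamma (real n + 2 - real (2*k))))
         \<and> (\<forall>n\<in>{1..m}. (\<Sum>k=1..(n+1) div 2.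
              sqrt (4*pi) * (-1)^(k-1) * pi^(2*k) * Gamma (real (2*n-2*k+2)) * zeta (real (2*m+2-2*k))
              / (4 powr (real n - real k + 2) * Gamma (real n + 5/2) * Gamma (real (2*k)) * Gamma (real n + 2 - real (2*k)))) > 0)"
  using zeta_summand_double_sum[OF assms] inner_sum_pos
  unfolding zeta_summand_def by auto

end
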